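(* Let $X_1,\dots,X_n$ be independent random variables with $X_i\sim\mathsf{Gam}(\alpha_i,\beta_i)$ (shape $\alpha_i>0$, rate $\beta_i>0$), let $S_n=\sum_{i=1}^nX_i$, $\mu_n=\mathbb E[S_n]$, $\sigma_n^2=\mathrm{Var}[S_n]$, and let $Z\sim\mathsf N(\mu_n,\sigma_n^2)$ and $G\sim\mathsf{Gam}(\alpha,\beta)$ with $\alpha/\beta=\mu_n$ and $\alpha/\beta^2=\sigma_n^2$. Then $\mathbb E[Z^j]=\mathbb E[G^j]=\mathbb E[S_n^j]$ for $j=1,2$, and for every integer $j\ge3$, \[ \mathbb E[Z^j]<\mathbb E[G^j]\le\mathbb E[S_n^j]. \]
   Context: $\mathsf{Gam}(a,b)$ denotes the gamma distribution with shape $a$ and rate $b$ (density $b^a x^{a-1}e^{-bx}/\Gamma(a)$). *)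

theory Defs
  imports "HOL-Probability.Probability"
begin

definition gamma_density :: "real \<Rightarrow> real \<Rightarrow> real \<Rightarrow> real" where
  "gamma_density a b x =
     (if x > 0 then b powr a * x powr (a - 1) * exp (- b * x) / Gamma a else 0)"

end

theory Submission
  imports Defs "HOL-Computational_Algebra.Formal_Power_Series"
begin

text \<open>
  If a law has moments m_j and cumulants \<kappa>_r, then
  m_{j+1} = \<Sum>_{i \<le> j} C(j,i) \<kappa>_{i+1} m_{j-i}, the coefficientwise form of M' = K' M for the
  exponential generating functions M = exp K. Cumulants of independent summands add;
  Gam(a,b) has \<kappa>_r = a (r-1)!/b^r, and N(\<mu>,\<sigma>^2) has only \<kappa>_1 = \<mu> and \<kappa>_2 = \<sigma>^2.
  When all cumulants are nonnegative the recursion makes every moment monotone in every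
  cumulant, so it suffices to compare cumulants: Z and G share \<kappa>_1 and \<kappa>_2 while G has
  \<kappa>_3 > 0, and Jensen's inequality for x \<mapsto> x^(r-1) gives \<kappa>_r(G) \<le> \<kappa>_r(S_n) once the first
  two cumulants agree.
\<close>

definition binomial_conv :: "(nat \<Rightarrow> real) \<Rightarrow> (nat \<Rightarrow> real) \<Rightarrow> nat \<Rightarrow> real" where
  "binomial_conv m m' j = (\<Sum>i\<le>j. real (j choose i) * m i * m' (j - i))"

text \<open>Indices are shifted by one: k i stands for the cumulant \<kappa>_{i+1}.\<close>
definition has_cumulants :: "(nat \<Rightarrow> real) \<Rightarrow> (nat \<Rightarrow> real) \<Rightarrow> bool" where
  "has_cumulants m k \<longleftrightarrow> m 0 = 1 \<and> (\<forall>j. m (Suc j) = binomial_conv k m j)"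

definition egf :: "(nat \<Rightarrow> real) \<Rightarrow> real fps" where
  "egf m = Abs_fps (\<lambda>j. m j / fact j)"

lemma fps_nth_egf_mult: "fps_nth (egf m * egf m') j = binomial_conv m m' j / fact j"
proof -
  have "fps_nth (egf m * egf m') j = (\<Sum>i=0..j. m i / fact i * (m' (j - i) / fact (j - i)))"
    by (simp add: fps_mult_nth egf_def)
  also have "\<dots> = (\<Sum>i\<le>j. real (j choose i) * m i * m' (j - i) / fact j)"
    by (auto simp: atLeast0AtMost binomial_fact intro!: sum.cong)
  finally show ?thesis
    by (simp add: binomial_conv_def sum_divide_distrib)
qed

lemma egf_binomial_conv: "egf (binomial_conv m m') = egf m * egf m'"
  by (rule fps_ext) (simp add: fps_nth_egf_mult[unfolded egf_def] egf_def)

lemma egf_add: "egf (\<lambda>i. k i + k' i) = egf k + egf k'"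
  by (rule fps_ext) (simp add: egf_def add_divide_distrib)

lemma has_cumulants_iff_egf:
  "has_cumulants m k \<longleftrightarrow> m 0 = 1 \<and> fps_deriv (egf m) = egf k * egf m"
proof -
  have "fps_nth (fps_deriv (egf m)) j = m (Suc j) / fact j" for j
    by (simp add: egf_def fps_deriv_nth field_simps del: of_nat_Suc)
  then show ?thesis
    by (auto simp: has_cumulants_def fps_eq_iff fps_nth_egf_mult)
qed

lemma has_cumulants_binomial_conv:
  assumes "has_cumulants m k" and "has_cumulants m' k'"
  shows "has_cumulants (binomial_conv m m') (\<lambda>i. k i + k' i)"
  using assms unfolding has_cumulants_iff_egf egf_binomial_conv egf_add
  by (simp add: binomial_conv_def fps_deriv_mult algebra_simps)

lemma has_cumulants_power: "has_cumulants (\<lambda>j. c ^ j) (\<lambda>i. if i = 0 then c else 0)"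
  by (simp add: has_cumulants_def binomial_conv_def if_distrib[of "\<lambda>x. _ * x * _"] sum.delta
      cong: if_cong)

lemma pochhammer_plus_one_eq_sum:
  "pochhammer (a + 1) j = (\<Sum>i\<le>j. fact j / fact i * pochhammer (a :: 'a :: field_char_0) i)"
proof (induction j)
  case (Suc j)
  have "(\<Sum>i\<le>Suc j. fact (Suc j) / fact i * pochhammer a i) =
        of_nat (Suc j) * (\<Sum>i\<le>j. fact j / fact i * pochhammer a i) + pochhammer a (Suc j)"
    by (simp add: sum_distrib_left field_simps del: of_nat_Suc)
  also have "\<dots> = (a + 1 + of_nat j) * pochhammer (a + 1) j"
    using Suc by (simp add: pochhammer_rec algebra_simps)
  finally show ?case
    by (simp add: pochhammer_rec' add_ac)
qed simp

definition gamma_cumulant :: "real \<Rightarrow> real \<Rightarrow> nat \<Rightarrow> real" where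
  "gamma_cumulant a b i = a * fact i / b ^ Suc i"

lemma has_cumulants_gamma:
  assumes "b \<noteq> 0"
  shows "has_cumulants (\<lambda>j. pochhammer a j / b ^ j) (gamma_cumulant a b)"
  unfolding has_cumulants_def
proof (intro conjI allI)
  fix j
  have "binomial_conv (gamma_cumulant a b) (\<lambda>j. pochhammer a j / b ^ j) j
      = a / b ^ Suc j * (\<Sum>i\<le>j. fact j / fact (j - i) * pochhammer a (j - i))"
    unfolding binomial_conv_def gamma_cumulant_def sum_distrib_left
    using assms by (intro sum.cong refl) (auto simp: binomial_fact field_simps power_add[symmetric])
  also have "(\<Sum>i\<le>j. fact j / fact (j - i) * pochhammer a (j - i)) = pochhammer (a + 1) j"
    unfolding pochhammer_plus_one_eq_sum
    by (rule sum.reindex_bij_witness[of _ "\<lambda>i. j - i" "\<lambda>i. j - i"]) auto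
  finally show "pochhammer a (Suc j) / b ^ Suc j =
      binomial_conv (gamma_cumulant a b) (\<lambda>j. pochhammer a j / b ^ j) j"
    by (simp add: pochhammer_rec)
qed simp

definition normal_cumulant :: "real \<Rightarrow> real \<Rightarrow> nat \<Rightarrow> real" where
  "normal_cumulant \<mu> s2 i = (if i = 0 then \<mu> else if i = 1 then s2 else 0)"

text \<open>This is (j-1)!! s2^(j/2) for even j, written as in the library lemma normal_moment_even.\<close>
definition normal_central_moment :: "real \<Rightarrow> nat \<Rightarrow> real" where
  "normal_central_moment s2 j =
     (if even j then fact j / ((2 / s2) ^ (j div 2) * fact (j div 2)) else 0)"

lemma normal_central_moment_Suc:
  assumes "s2 > 0"
  shows "normal_central_moment s2 (Suc j) = real j * s2 * normal_central_moment s2 (j - 1)"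
proof (cases "even j")
  case True
  then show ?thesis
    by (cases j) (auto simp: normal_central_moment_def)
next
  case False
  then obtain k where k: "j = 2 * k + 1"
    using oddE by blast
  have "fact (2 * k + 2) = 2 * real (k + 1) * (2 * real k + 1) * (fact (2 * k) :: real)"
    and "fact (k + 1) = real (k + 1) * (fact k :: real)"
    by (simp_all add: algebra_simps)
  moreover have "2 * real (k + 1) * (2 * real k + 1) * F / (P * (2 / s2) * (real (k + 1) * f))
      = (2 * real k + 1) * s2 * (F / (P * f))" if "P \<noteq> 0" "f \<noteq> 0" for F f P :: real
    using assms that by (simp add: field_simps del: of_nat_Suc)
  ultimately have "fact (2 * k + 2) / ((2 / s2) ^ (k + 1) * fact (k + 1))
      = (2 * real k + 1) * s2 * (fact (2 * k) / ((2 / s2) ^ k * fact k))"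
    using assms by (simp only: power_Suc2 Suc_eq_plus1[symmetric]) simp
  then show ?thesis
    using k by (simp add: normal_central_moment_def)
qed

lemma has_cumulants_normal_central_moment:
  assumes "s2 > 0"
  shows "has_cumulants (normal_central_moment s2) (normal_cumulant 0 s2)"
proof -
  have "binomial_conv (normal_cumulant 0 s2) (normal_central_moment s2) j
      = real j * s2 * normal_central_moment s2 (j - 1)" for j
  proof -
    have "normal_cumulant 0 s2 = (\<lambda>i. if i = 1 then s2 else 0)"
      by (auto simp: normal_cumulant_def)
    then show ?thesis
      by (cases j)
        (auto simp: binomial_conv_def if_distrib[of "\<lambda>x. _ * x * _"] sum.delta cong: if_cong)
  qed
  then show ?thesis
    using normal_central_moment_Suc[OF assms]
    by (simp add: has_cumulants_def) (simp add: normal_central_moment_def)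
qed

lemma has_cumulants_mono:
  assumes m: "has_cumulants m k" and m': "has_cumulants m' k'"
    and k: "\<And>i. 0 \<le> k i" and kk': "\<And>i. k i \<le> k' i"
  shows "0 \<le> m j \<and> m j \<le> m' j"
proof (induction j rule: less_induct)
  case (less j)
  show ?case
  proof (cases j)
    case 0
    then show ?thesis
      using m m' by (simp add: has_cumulants_def)
  next
    case (Suc j')
    have "0 \<le> real (j' choose i) * k i * m (j' - i) \<and>
          real (j' choose i) * k i * m (j' - i) \<le> real (j' choose i) * k' i * m' (j' - i)" for i
      using less[of "j' - i"] Suc k[of i] kk'[of i] by (auto intro!: mult_mono)
    then show ?thesis
      using m m' Suc by (auto simp: has_cumulants_def binomial_conv_def intro!: sum_nonneg sum_mono)
  qed
qed

lemma has_cumulants_pos: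
  assumes m: "has_cumulants m k" and k: "\<And>i. 0 \<le> k i" and "k 0 > 0"
  shows "m j > 0"
proof (induction j)
  case (Suc j)
  have "0 < real (j choose 0) * k 0 * m (j - 0)"
    using Suc \<open>k 0 > 0\<close> by simp
  also have "\<dots> \<le> binomial_conv k m j"
    unfolding binomial_conv_def
    using has_cumulants_mono[OF m m k order_refl] k by (intro member_le_sum) auto
  finally show ?case
    using m by (simp add: has_cumulants_def)
qed (use m in \<open>simp add: has_cumulants_def\<close>)

lemma has_cumulants_strict_mono:
  assumes m: "has_cumulants m k" and m': "has_cumulants m' k'"
    and k: "\<And>i. 0 \<le> k i" and kk': "\<And>i. k i \<le> k' i" and "k' 0 > 0"
    and "k r < k' r" and "r \<le> j'"
  shows "m (Suc j') < m' (Suc j')"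
proof -
  have le: "0 \<le> m i \<and> m i \<le> m' i" for i
    using has_cumulants_mono[OF m m' k kk'] .
  have "m' (j' - r) > 0"
    using has_cumulants_pos[OF m'] k kk' \<open>k' 0 > 0\<close> by (meson order_trans)
  then have "k r * m (j' - r) < k' r * m' (j' - r)"
    using le[of "j' - r"] k[of r] \<open>k r < k' r\<close>
    by (meson mult_left_mono mult_strict_right_mono order_le_less_trans)
  then have "real (j' choose r) * k r * m (j' - r) < real (j' choose r) * k' r * m' (j' - r)"
    using \<open>r \<le> j'\<close> by (simp add: mult.assoc)
  moreover have "real (j' choose i) * k i * m (j' - i) \<le> real (j' choose i) * k' i * m' (j' - i)" for i
    using le[of "j' - i"] k[of i] kk'[of i] by (auto intro!: mult_mono)
  ultimately have "binomial_conv k m j' < binomial_conv k' m' j'"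
    unfolding binomial_conv_def using \<open>r \<le> j'\<close> by (intro sum_strict_mono_ex1) auto
  then show ?thesis
    using m m' by (simp add: has_cumulants_def)
qed

lemma has_cumulants_moments_1_2:
  assumes "has_cumulants m k"
  shows "m 1 = k 0" and "m 2 = (k 0)\<^sup>2 + k 1"
  using assms[unfolded has_cumulants_def] spec[of _ 0] spec[of _ 1]
  by (auto simp: binomial_conv_def numeral_2_eq_2 power2_eq_square)

lemma gamma_cumulant_nonneg: "a \<ge> 0 \<Longrightarrow> b > 0 \<Longrightarrow> 0 \<le> gamma_cumulant a b r"
  by (simp add: gamma_cumulant_def)

lemma normal_cumulant_le_gamma_cumulant:
  assumes "\<alpha> > 0" and "\<beta> > 0"
  shows "normal_cumulant (\<alpha> / \<beta>) (\<alpha> / \<beta>\<^sup>2) r \<le> gamma_cumulant \<alpha> \<beta> r"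
  using assms gamma_cumulant_nonneg[of \<alpha> \<beta> r]
  by (auto simp: normal_cumulant_def gamma_cumulant_def power2_eq_square)

text \<open>Jensen's inequality for x \<mapsto> x^r at the points 1/b_i, weighted proportionally to a_i/b_i.\<close>
lemma gamma_cumulant_le_sum:
  assumes "finite I" and ab: "\<And>i. i \<in> I \<Longrightarrow> a i > 0 \<and> b i > 0" and "\<alpha> > 0" and "\<beta> > 0"
    and cum0: "gamma_cumulant \<alpha> \<beta> 0 = (\<Sum>i\<in>I. gamma_cumulant (a i) (b i) 0)"
    and cum1: "gamma_cumulant \<alpha> \<beta> 1 = (\<Sum>i\<in>I. gamma_cumulant (a i) (b i) 1)"
  shows "gamma_cumulant \<alpha> \<beta> r \<le> (\<Sum>i\<in>I. gamma_cumulant (a i) (b i) r)"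
proof -
  define \<nu> where "\<nu> = \<alpha> / \<beta>"
  have "\<nu> > 0"
    using \<open>\<alpha> > 0\<close> \<open>\<beta> > 0\<close> by (simp add: \<nu>_def)
  have sum0: "(\<Sum>i\<in>I. a i / b i) = \<nu>" and sum1: "(\<Sum>i\<in>I. a i / (b i)\<^sup>2) = \<alpha> / \<beta>\<^sup>2"
    using cum0 cum1 by (simp_all add: gamma_cumulant_def \<nu>_def power2_eq_square)
  then have "I \<noteq> {}"
    using \<open>\<nu> > 0\<close> by auto
  define p where "p i = a i / b i / \<nu>" for i
  have p_sum: "(\<Sum>i\<in>I. p i) = 1"
    unfolding p_def sum_divide_distrib[symmetric] using sum0 \<open>\<nu> > 0\<close> by simp
  have p_nonneg: "p i \<ge> 0" if "i \<in> I" for i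
    using ab[OF that] \<open>\<nu> > 0\<close> by (simp add: p_def)
  have convex: "convex_on {0..} (\<lambda>x::real. x ^ r)"
    using convex_power_odd[of r] convex_on_subset[OF convex_power_even[of r], of "{0..}"]
    by blast
  have "(\<Sum>i\<in>I. p i *\<^sub>R (1 / b i)) ^ r \<le> (\<Sum>i\<in>I. p i * (1 / b i) ^ r)"
    by (rule convex_on_sum[OF \<open>finite I\<close> \<open>I \<noteq> {}\<close> convex p_sum p_nonneg])
      (use ab in \<open>auto simp: less_imp_le\<close>)
  also have "(\<Sum>i\<in>I. p i *\<^sub>R (1 / b i)) = (\<Sum>i\<in>I. a i / (b i)\<^sup>2) / \<nu>"
    by (simp add: p_def sum_divide_distrib power2_eq_square mult_ac)
  also have "\<dots> = 1 / \<beta>"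
    using sum1 \<open>\<alpha> > 0\<close> \<open>\<beta> > 0\<close> by (simp add: \<nu>_def power2_eq_square)
  also have "(\<Sum>i\<in>I. p i * (1 / b i) ^ r) = (\<Sum>i\<in>I. a i / b i ^ Suc r) / \<nu>"
    by (simp add: p_def sum_divide_distrib power_one_over field_simps)
  finally have "\<nu> * (1 / \<beta>) ^ r \<le> (\<Sum>i\<in>I. a i / b i ^ Suc r)"
    using \<open>\<nu> > 0\<close> by (simp add: field_simps)
  then have "fact r * (\<nu> * (1 / \<beta>) ^ r) \<le> fact r * (\<Sum>i\<in>I. a i / b i ^ Suc r)"
    by (rule mult_left_mono) simp
  then show ?thesis
    by (simp add: gamma_cumulant_def \<nu>_def sum_distrib_left power_one_over field_simps)
qed

lemma gamma_density_nonneg: "a > 0 \<Longrightarrow> 0 \<le> gamma_density a b x"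
  unfolding gamma_density_def by (auto intro!: divide_nonneg_pos Gamma_real_pos)

lemma has_bochner_integral_Gamma:
  assumes "s > (0::real)"
  shows "has_bochner_integral lborel (\<lambda>t. indicator {0..} t * t powr (s - 1) / exp t) (Gamma s)"
  using assms Gamma_conv_nn_integral_real[OF assms]
  by (intro has_bochner_integral_nn_integral) (auto simp: Gamma_real_pos less_imp_le)

text \<open>Substituting x = t/b reduces the j-th moment to \<Gamma>(a + j) / (\<Gamma>(a) b^j).\<close>
lemma has_bochner_integral_gamma_density_power:
  assumes a: "a > 0" and b: "b > 0"
  shows "has_bochner_integral lborel (\<lambda>x. gamma_density a b x * x ^ j) (pochhammer a j / b ^ j)"
proof -
  define C where "C = b / (Gamma a * b ^ j)"
  have "(\<lambda>x. gamma_density a b (0 + (1/b) * x) * (0 + (1/b) * x) ^ j) =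
     (\<lambda>t. C * (indicator {0..} t * t powr (a + j - 1) / exp t))"
  proof
    fix x :: real
    show "gamma_density a b (0 + (1/b) * x) * (0 + (1/b) * x) ^ j =
        C * (indicator {0..} x * x powr (a + j - 1) / exp x)"
    proof (cases "x > 0")
      case True
      have "(x / b) powr (a - 1) = x powr (a - 1) / b powr (a - 1)"
        using True b by (simp add: powr_divide)
      moreover have "b powr a = b * b powr (a - 1)"
        using b by (simp add: powr_diff)
      moreover have "x powr (a + j - 1) = x powr (a - 1) * x ^ j"
        using True by (simp add: powr_add[symmetric] powr_realpow[symmetric] algebra_simps)
      ultimately show ?thesis
        using True a b by (simp add: gamma_density_def C_def exp_minus power_divide field_simps)
    next
      case False
      then have "\<not> 0 < x / b"
        using b by (simp add: not_less divide_nonpos_pos)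
      then show ?thesis
        using False by (auto simp: gamma_density_def indicator_def)
    qed
  qed
  moreover have "pochhammer a j = Gamma (a + j) / Gamma a"
    using a by (subst pochhammer_Gamma) (auto elim!: nonpos_Ints_cases)
  then have "C * Gamma (a + j) = (pochhammer a j / b ^ j) /\<^sub>R \<bar>1/b\<bar>"
    using a b by (simp add: C_def field_simps Gamma_real_pos)
  ultimately show ?thesis
    using has_bochner_integral_mult_right[OF has_bochner_integral_Gamma[of "a + j"], of C] a b
    by (subst lborel_has_bochner_integral_real_affine_iff[where c = "1/b" and t = 0]) simp_all
qed

lemma has_bochner_integral_normal_central_moment:
  assumes "s2 > 0"
  shows "has_bochner_integral lborel (\<lambda>x. normal_density \<mu> (sqrt s2) x * (x - \<mu>) ^ j)
           (normal_central_moment s2 j)"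
proof (cases "even j")
  case True
  then obtain k where "j = 2 * k" by blast
  then show ?thesis
    using normal_moment_even[of "sqrt s2" \<mu> k] assms by (simp add: normal_central_moment_def)
next
  case False
  then obtain k where "j = 2 * k + 1" using oddE by blast
  then show ?thesis
    using normal_moment_odd[of "sqrt s2" \<mu> k] assms by (simp add: normal_central_moment_def)
qed

lemma distributed_has_bochner_integral:
  assumes "distributed M lborel Y (\<lambda>x. ennreal (f x))" and "\<And>x. 0 \<le> f x"
    and "g \<in> borel_measurable borel"
    and "has_bochner_integral lborel (\<lambda>x. f x * g x) v"
  shows "has_bochner_integral M (\<lambda>\<omega>. g (Y \<omega>)) v"
  using assms distributed_integrable[OF assms(1), of g] distributed_integral[OF assms(1), of g]
  by (auto simp: has_bochner_integral_iff)

context prob_space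
begin

lemma has_cumulants_gamma_moments:
  assumes "distributed M lborel Y (gamma_density a b)" and "a > 0" and "b > 0"
  shows "integrable M (\<lambda>\<omega>. Y \<omega> ^ j)"
    and "has_cumulants (\<lambda>j. expectation (\<lambda>\<omega>. Y \<omega> ^ j)) (gamma_cumulant a b)"
proof -
  have moment: "has_bochner_integral M (\<lambda>\<omega>. Y \<omega> ^ j) (pochhammer a j / b ^ j)" for j
    by (rule distributed_has_bochner_integral[OF assms(1) _ _ has_bochner_integral_gamma_density_power])
      (use assms gamma_density_nonneg in auto)
  then show "integrable M (\<lambda>\<omega>. Y \<omega> ^ j)"
    by (rule integrable.intros)
  have "(\<lambda>j. expectation (\<lambda>\<omega>. Y \<omega> ^ j)) = (\<lambda>j. pochhammer a j / b ^ j)"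
    using has_bochner_integral_integral_eq[OF moment] by simp
  then show "has_cumulants (\<lambda>j. expectation (\<lambda>\<omega>. Y \<omega> ^ j)) (gamma_cumulant a b)"
    using has_cumulants_gamma[of b a] \<open>b > 0\<close> by simp
qed

lemma has_cumulants_normal_moments:
  assumes "distributed M lborel Z (normal_density \<mu> (sqrt s2))" and "s2 > 0"
  shows "has_cumulants (\<lambda>j. expectation (\<lambda>\<omega>. Z \<omega> ^ j)) (normal_cumulant \<mu> s2)"
proof -
  have central: "has_bochner_integral M (\<lambda>\<omega>. (Z \<omega> - \<mu>) ^ l) (normal_central_moment s2 l)" for l
    by (rule distributed_has_bochner_integral[OF assms(1) _ _
          has_bochner_integral_normal_central_moment[OF assms(2)]]) auto
  have "Z \<omega> ^ j = (\<Sum>i\<le>j. real (j choose i) * \<mu> ^ i * (Z \<omega> - \<mu>) ^ (j - i))" for \<omega> j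
    using binomial_ring[of \<mu> "Z \<omega> - \<mu>" j] by simp
  then have moments: "(\<lambda>j. expectation (\<lambda>\<omega>. Z \<omega> ^ j)) =
      binomial_conv (\<lambda>i. \<mu> ^ i) (normal_central_moment s2)"
    using central by (simp add: binomial_conv_def has_bochner_integral_iff fun_eq_iff)
  have "has_cumulants (binomial_conv (\<lambda>i. \<mu> ^ i) (normal_central_moment s2))
      (\<lambda>i. (if i = 0 then \<mu> else 0) + normal_cumulant 0 s2 i)"
    by (rule has_cumulants_binomial_conv[OF has_cumulants_power
          has_cumulants_normal_central_moment[OF assms(2)]])
  also have "(\<lambda>i. (if i = 0 then \<mu> else 0) + normal_cumulant 0 s2 i) = normal_cumulant \<mu> s2"
    by (auto simp: normal_cumulant_def)
  finally show ?thesis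
    unfolding moments .
qed

lemma
  fixes Y T :: "'a \<Rightarrow> real"
  assumes "indep_var borel Y borel T"
    and Y: "\<And>j. integrable M (\<lambda>\<omega>. Y \<omega> ^ j)" and T: "\<And>j. integrable M (\<lambda>\<omega>. T \<omega> ^ j)"
  shows integrable_power_add_indep: "integrable M (\<lambda>\<omega>. (Y \<omega> + T \<omega>) ^ j)"
    and expectation_power_add_indep: "expectation (\<lambda>\<omega>. (Y \<omega> + T \<omega>) ^ j) =
      binomial_conv (\<lambda>i. expectation (\<lambda>\<omega>. Y \<omega> ^ i)) (\<lambda>i. expectation (\<lambda>\<omega>. T \<omega> ^ i)) j"
proof -
  have "indep_var borel (\<lambda>\<omega>. Y \<omega> ^ i) borel (\<lambda>\<omega>. T \<omega> ^ l)" for i l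
    using indep_var_compose[OF assms(1), of "\<lambda>x. x ^ i" borel "\<lambda>x. x ^ l" borel]
    by (simp add: comp_def)
  then have "integrable M (\<lambda>\<omega>. Y \<omega> ^ i * T \<omega> ^ l)"
    and "expectation (\<lambda>\<omega>. Y \<omega> ^ i * T \<omega> ^ l) =
      expectation (\<lambda>\<omega>. Y \<omega> ^ i) * expectation (\<lambda>\<omega>. T \<omega> ^ l)" for i l
    using indep_var_integrable indep_var_lebesgue_integral Y T by blast+
  moreover have "(Y \<omega> + T \<omega>) ^ j = (\<Sum>i\<le>j. real (j choose i) * (Y \<omega> ^ i * T \<omega> ^ (j - i)))" for \<omega>
    using binomial_ring[of "Y \<omega>" "T \<omega>" j] by (simp add: mult.assoc)
  ultimately show "integrable M (\<lambda>\<omega>. (Y \<omega> + T \<omega>) ^ j)"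
    and "expectation (\<lambda>\<omega>. (Y \<omega> + T \<omega>) ^ j) =
      binomial_conv (\<lambda>i. expectation (\<lambda>\<omega>. Y \<omega> ^ i)) (\<lambda>i. expectation (\<lambda>\<omega>. T \<omega> ^ i)) j"
    by (simp_all add: binomial_conv_def mult.assoc)
qed

lemma has_cumulants_sum_indep_gamma:
  assumes "finite I" and "indep_vars (\<lambda>_. borel) X I"
    and "\<And>i. i \<in> I \<Longrightarrow> a i > 0 \<and> b i > 0"
    and "\<And>i. i \<in> I \<Longrightarrow> distributed M lborel (X i) (gamma_density (a i) (b i))"
  shows "(\<forall>j. integrable M (\<lambda>\<omega>. (\<Sum>i\<in>I. X i \<omega>) ^ j)) \<and>
    has_cumulants (\<lambda>j. expectation (\<lambda>\<omega>. (\<Sum>i\<in>I. X i \<omega>) ^ j))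
      (\<lambda>r. \<Sum>i\<in>I. gamma_cumulant (a i) (b i) r)"
  using assms
proof (induction I rule: finite_induct)
  case empty
  show ?case
    using has_cumulants_power[of 0] by (simp add: prob_space)
next
  case (insert x F)
  let ?T = "\<lambda>\<omega>. \<Sum>i\<in>F. X i \<omega>"
  have T: "\<forall>j. integrable M (\<lambda>\<omega>. ?T \<omega> ^ j)"
    "has_cumulants (\<lambda>j. expectation (\<lambda>\<omega>. ?T \<omega> ^ j))
      (\<lambda>r. \<Sum>i\<in>F. gamma_cumulant (a i) (b i) r)"
    using insert indep_vars_subset[OF insert.prems(1)] by auto
  have Y: "integrable M (\<lambda>\<omega>. X x \<omega> ^ j)"
    "has_cumulants (\<lambda>j. expectation (\<lambda>\<omega>. X x \<omega> ^ j)) (gamma_cumulant (a x) (b x))" for j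
    using has_cumulants_gamma_moments[of "X x" "a x" "b x"] insert.prems by auto
  have indep: "indep_var borel (X x) borel ?T"
    by (rule indep_vars_sum[OF insert.hyps(1,2) insert.prems(1)])
  show ?case
    using integrable_power_add_indep[OF indep Y(1)] expectation_power_add_indep[OF indep Y(1)]
      has_cumulants_binomial_conv[OF Y(2) T(2)] T(1) insert.hyps
    by simp
qed

end

theorem corollary1:
  fixes M :: "'m measure" and n :: nat
    and X :: "nat \<Rightarrow> 'm \<Rightarrow> real" and Z G :: "'m \<Rightarrow> real"
    and a b :: "nat \<Rightarrow> real" and \<alpha> \<beta> :: real
  assumes "prob_space M"
    and "prob_space.indep_vars M (\<lambda>_. borel) X {1..n}"
    and "\<And>i. i \<in> {1..n} \<Longrightarrow> a i > 0 \<and> b i > 0"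
    and "\<And>i. i \<in> {1..n} \<Longrightarrow> distributed M lborel (X i) (gamma_density (a i) (b i))"
  defines "S \<equiv> (\<lambda>\<omega>. \<Sum>i\<in>{1..n}. X i \<omega>)"
  defines "\<mu> \<equiv> prob_space.expectation M S"
    and "\<sigma>2 \<equiv> prob_space.variance M S"
  assumes "distributed M lborel Z (normal_density \<mu> (sqrt \<sigma>2))"
    and "\<alpha> > 0" and "\<beta> > 0"
    and "distributed M lborel G (gamma_density \<alpha> \<beta>)"
    and "\<alpha> / \<beta> = \<mu>" and "\<alpha> / \<beta>\<^sup>2 = \<sigma>2"
  shows "(\<forall>j\<in>{1, 2::nat}.
           prob_space.expectation M (\<lambda>\<omega>. Z \<omega> ^ j) = prob_space.expectation M (\<lambda>\<omega>. G \<omega> ^ j) \<and>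
           prob_space.expectation M (\<lambda>\<omega>. G \<omega> ^ j) = prob_space.expectation M (\<lambda>\<omega>. S \<omega> ^ j)) \<and>
         (\<forall>j::nat. j \<ge> 3 \<longrightarrow>
           prob_space.expectation M (\<lambda>\<omega>. Z \<omega> ^ j) < prob_space.expectation M (\<lambda>\<omega>. G \<omega> ^ j) \<and>
           prob_space.expectation M (\<lambda>\<omega>. G \<omega> ^ j) \<le> prob_space.expectation M (\<lambda>\<omega>. S \<omega> ^ j))"
proof -
  interpret prob_space M
    by (rule assms(1))
  define \<kappa> where "\<kappa> r = (\<Sum>i\<in>{1..n}. gamma_cumulant (a i) (b i) r)" for r
  have S_moments: "\<And>j. integrable M (\<lambda>\<omega>. S \<omega> ^ j)"
    and S: "has_cumulants (\<lambda>j. expectation (\<lambda>\<omega>. S \<omega> ^ j)) \<kappa>"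
    using has_cumulants_sum_indep_gamma[of "{1..n}" X a b] assms(2-4)
    unfolding S_def \<kappa>_def by auto
  have \<kappa>0: "\<kappa> 0 = gamma_cumulant \<alpha> \<beta> 0" and \<kappa>1: "\<kappa> 1 = gamma_cumulant \<alpha> \<beta> 1"
    using has_cumulants_moments_1_2[OF S] variance_eq[of S] S_moments[of 1] S_moments[of 2]
      assms(12,13) by (simp_all add: \<mu>_def \<sigma>2_def gamma_cumulant_def power2_eq_square)
  have "\<sigma>2 > 0"
    using assms(9,10,13) by (metis divide_pos_pos zero_less_power)
  then have Z: "has_cumulants (\<lambda>j. expectation (\<lambda>\<omega>. Z \<omega> ^ j))
      (normal_cumulant (\<alpha> / \<beta>) (\<alpha> / \<beta>\<^sup>2))"
    using has_cumulants_normal_moments[OF assms(8)] assms(12,13) by simp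
  have G: "has_cumulants (\<lambda>j. expectation (\<lambda>\<omega>. G \<omega> ^ j)) (gamma_cumulant \<alpha> \<beta>)"
    by (rule has_cumulants_gamma_moments(2)[OF assms(11,9,10)])
  have G_le_\<kappa>: "gamma_cumulant \<alpha> \<beta> r \<le> \<kappa> r" for r
    using \<kappa>0 \<kappa>1 assms(3,9,10) unfolding \<kappa>_def by (intro gamma_cumulant_le_sum) auto
  have Z_lt_G: "expectation (\<lambda>\<omega>. Z \<omega> ^ j) < expectation (\<lambda>\<omega>. G \<omega> ^ j)" if "j \<ge> 3" for j
  proof -
    obtain j' where "j = Suc j'" "2 \<le> j'"
      using \<open>j \<ge> 3\<close> by (cases j) auto
    then show ?thesis
      using has_cumulants_strict_mono[OF Z G _ normal_cumulant_le_gamma_cumulant, of 2 j'] assms(9,10)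
      by (simp add: normal_cumulant_def gamma_cumulant_def)
  qed
  have G_le_S: "expectation (\<lambda>\<omega>. G \<omega> ^ j) \<le> expectation (\<lambda>\<omega>. S \<omega> ^ j)" for j
    using has_cumulants_mono[OF G S gamma_cumulant_nonneg G_le_\<kappa>] assms(9,10) by simp
  show ?thesis
    using has_cumulants_moments_1_2[OF Z] has_cumulants_moments_1_2[OF G]
      has_cumulants_moments_1_2[OF S] \<kappa>0 \<kappa>1 Z_lt_G G_le_S
    by (auto simp: normal_cumulant_def gamma_cumulant_def power2_eq_square)
qed

end
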